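(* Let $d>k\geq1$, $\varepsilon\in(0,1)$, let $A\in\mathbb{R}^{d\times d}$ be symmetric positive semidefinite with $\lambda_k>\lambda_{k+1}$, $\beta>0$ with $\lambda_k>2\sqrt\beta\geq\lambda_{k+1}$, $X_0\in\mathrm{St}(d,k)$ with $\cos\theta_k(U_k,X_0)>0$, and consider ANPM with perturbations satisfying for all $t\geq0$: $\|U_{-k}^\top\Xi_t\|_2\leq c(\lambda_k-2\sqrt\beta)\varepsilon$ and $\|U_k^\top\Xi_t\|_2\leq c(\lambda_k-2\sqrt\beta)\cos\theta_k(U_k,X_t)$, $c=1/32$. Then for all $t\geq1$, $$H_{t+1}C_{t+1}=\Lambda_{-k}H_tC_t-\beta H_{t-1}C_{t-1}+\Psi_tC_t,$$ and $H_1C_1=\tfrac12\Lambda_{-k}H_0C_0+\Psi_0C_0$.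
   Context: $A$ has eigenvalues $\lambda_1\geq\dots\geq\lambda_d\geq0$, orthonormal eigenvectors $u_i$; $U_k:=[u_1..u_k]$, $U_{-k}:=[u_{k+1}..u_d]$, $\Lambda_k:=\mathrm{diag}(\lambda_1..\lambda_k)$, $\Lambda_{-k}:=\mathrm{diag}(\lambda_{k+1}..\lambda_d)$. QR: $Y=XR$, $X^\top X=I_k$, $R$ upper triangular with nonnegative diagonal; $\theta_k(U,X):=\arccos\sigma_{\min}(U^\top X)$. ANPM: $(X_1,R_1)=\mathrm{QR}(\tfrac12AX_0+\Xi_0)$; for $t\geq1$, $Y_{t+1}=AX_t-\beta X_{t-1}R_t^{-1}+\Xi_t$, $(X_{t+1},R_{t+1})=\mathrm{QR}(Y_{t+1})$. $H_t:=(U_{-k}^\top X_t)(U_k^\top X_t)^{-1}$; $\Psi_t:=(U_{-k}^\top\Xi_t)(U_k^\top X_t)^{-1}$; $E_t:=\Lambda_k^{-1}(U_k^\top\Xi_t)(U_k^\top X_t)^{-1}$; $G_0:=(I_k/2+E_0)^{-1}$, $G_{t+1}:=(I_k-\beta\Lambda_k^{-1}G_t\Lambda_k^{-1}+E_{t+1})^{-1}$; $C_0:=I_k$ and $C_t:=\Lambda_kG_{t-1}^{-1}\Lambda_kG_{t-2}^{-1}\cdots\Lambda_kG_0^{-1}$ for $t\geq1$. *)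

theory Defs
  imports "Jordan_Normal_Form.Matrix"
begin

(* Matrix inverse (junk value 0 for singular matrices). *)
definition minv :: "real mat \<Rightarrow> real mat" where
  "minv M = (if invertible_mat M then (SOME B. inverts_mat M B \<and> inverts_mat B M)
             else 0\<^sub>m (dim_col M) (dim_row M))"

definition vnorm :: "real vec \<Rightarrow> real" where
  "vnorm x = sqrt (x \<bullet> x)"

definition spec_norm :: "real mat \<Rightarrow> real" where
  "spec_norm M = Sup (insert 0 {vnorm (M *\<^sub>v x) | x. x \<in> carrier_vec (dim_col M) \<and> vnorm x = 1})"

definition sigma_min :: "real mat \<Rightarrow> real" where
  "sigma_min M = Inf {vnorm (M *\<^sub>v x) | x. x \<in> carrier_vec (dim_col M) \<and> vnorm x = 1}"

definition theta :: "real mat \<Rightarrow> real mat \<Rightarrow> real" where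
  "theta U X = arccos (sigma_min (transpose_mat U * X))"

definition diagm :: "nat \<Rightarrow> (nat \<Rightarrow> real) \<Rightarrow> real mat" where
  "diagm n f = mat n n (\<lambda>(i,j). if i = j then f i else 0)"

definition Ufirst :: "nat \<Rightarrow> real mat \<Rightarrow> real mat" where
  "Ufirst k U = mat (dim_row U) k (\<lambda>(i,j). U $$ (i, j))"

definition Urest :: "nat \<Rightarrow> real mat \<Rightarrow> real mat" where
  "Urest k U = mat (dim_row U) (dim_col U - k) (\<lambda>(i,j). U $$ (i, k + j))"

(* Lambda_k = diag(lambda_1..lambda_k), Lambda_{-k} = diag(lambda_{k+1}..lambda_d);
   eigenvalues are indexed from 0, i.e. lam i = lambda_{i+1} *)
definition Lam_first :: "nat \<Rightarrow> (nat \<Rightarrow> real) \<Rightarrow> real mat" where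
  "Lam_first k lam = diagm k lam"

definition Lam_rest :: "nat \<Rightarrow> nat \<Rightarrow> (nat \<Rightarrow> real) \<Rightarrow> real mat" where
  "Lam_rest d k lam = diagm (d - k) (\<lambda>i. lam (k + i))"

definition is_QR :: "nat \<Rightarrow> real mat \<Rightarrow> real mat \<Rightarrow> real mat \<Rightarrow> bool" where
  "is_QR k Y X R \<longleftrightarrow> X \<in> carrier_mat (dim_row Y) k \<and> R \<in> carrier_mat k k \<and>
     Y = X * R \<and> transpose_mat X * X = 1\<^sub>m k \<and>
     (\<forall>i<k. \<forall>j<i. R $$ (i, j) = 0) \<and> (\<forall>i<k. R $$ (i, i) \<ge> 0)"

definition stiefel :: "nat \<Rightarrow> nat \<Rightarrow> real mat set" where
  "stiefel d k = {X. X \<in> carrier_mat d k \<and> transpose_mat X * X = 1\<^sub>m k}"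

definition Hm :: "nat \<Rightarrow> real mat \<Rightarrow> real mat \<Rightarrow> real mat" where
  "Hm k U X = (transpose_mat (Urest k U) * X) * minv (transpose_mat (Ufirst k U) * X)"

definition Psim :: "nat \<Rightarrow> real mat \<Rightarrow> real mat \<Rightarrow> real mat \<Rightarrow> real mat" where
  "Psim k U Xi X = (transpose_mat (Urest k U) * Xi) * minv (transpose_mat (Ufirst k U) * X)"

definition Em :: "nat \<Rightarrow> real mat \<Rightarrow> (nat \<Rightarrow> real) \<Rightarrow> real mat \<Rightarrow> real mat \<Rightarrow> real mat" where
  "Em k U lam Xi X = minv (Lam_first k lam) * (transpose_mat (Ufirst k U) * Xi)
                      * minv (transpose_mat (Ufirst k U) * X)"

fun Gm :: "nat \<Rightarrow> (nat \<Rightarrow> real) \<Rightarrow> real \<Rightarrow> (nat \<Rightarrow> real mat) \<Rightarrow> nat \<Rightarrow> real mat" where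
  "Gm k lam \<beta> E 0 = minv ((1/2) \<cdot>\<^sub>m 1\<^sub>m k + E 0)"
| "Gm k lam \<beta> E (Suc t) = minv (1\<^sub>m k - \<beta> \<cdot>\<^sub>m (minv (Lam_first k lam) * Gm k lam \<beta> E t
                                  * minv (Lam_first k lam)) + E (Suc t))"

fun Cm :: "nat \<Rightarrow> (nat \<Rightarrow> real) \<Rightarrow> real \<Rightarrow> (nat \<Rightarrow> real mat) \<Rightarrow> nat \<Rightarrow> real mat" where
  "Cm k lam \<beta> E 0 = 1\<^sub>m k"
| "Cm k lam \<beta> E (Suc t) = Lam_first k lam * minv (Gm k lam \<beta> E t) * Cm k lam \<beta> E t"

end

theory Submission
  imports Defs "Jordan_Normal_Form.Determinant" "HOL-Analysis.L2_Norm"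
begin

(* Write P_t = U_k^T X_t and Q_t = U_{-k}^T X_t, so that H_t = Q_t P_t^{-1}.  Since
   U_k^T A = Lambda_k U_k^T, projecting the ANPM recurrence gives
     P_{t+1} R_{t+1} = Lambda_k P_t - beta P_{t-1} R_t^{-1} + U_k^T Xi_t,
   and the same recurrence for Q_t with Lambda_{-k}.  With S_t = R_t ... R_1 P_0^{-1}, the claimed
   recurrence for H_t C_t is the projected recurrence for Q_t S_t, as soon as C_t = P_t S_t.

   Since minv is junk (zero) on singular matrices, this identity has to be proved by induction
   together with the invertibility of P_t, R_t and G_t^{-1} and the bound ||G_t|| <= 1/r, where
   r = sqrt beta / lambda_k < 1/2.  The perturbation hypothesis gives ||E_t|| <= (1 - 2r)/32, so
   G_t^{-1} is within (1 - 2r)/32 of I/2 (for t = 0) or within (1 - 2r)/32 + r of I, hence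
   invertible with inverse of norm at most 1/r.  Then C_{t+1} = Lambda_k G_t^{-1} C_t equals
   P_{t+1} R_{t+1} S_t and is invertible, which forces P_{t+1} and R_{t+1} to be invertible. *)

section \<open>Euclidean norm and operator norm bounds\<close>

lemma vnorm_eq_L2_set: "vnorm x = L2_set (\<lambda>i. x $ i) {0..<dim_vec x}"
  unfolding vnorm_def L2_set_def scalar_prod_def by (simp add: power2_eq_square)

lemma vnorm_nonneg [simp]: "0 \<le> vnorm x"
  by (simp add: vnorm_eq_L2_set)

lemma vnorm_zero_vec [simp]: "vnorm (0\<^sub>v n) = 0"
  by (simp add: vnorm_def)

lemma vnorm_eq_0_iff: "vnorm v = 0 \<longleftrightarrow> v = 0\<^sub>v (dim_vec v)"
proof
  assume "vnorm v = 0"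
  then have "\<forall>i\<in>{0..<dim_vec v}. v $ i = 0"
    unfolding vnorm_eq_L2_set by (subst (asm) L2_set_eq_0_iff) auto
  then show "v = 0\<^sub>v (dim_vec v)" by (intro eq_vecI) auto
qed (metis vnorm_zero_vec)

lemma vnorm_diff_le: "dim_vec u = dim_vec v \<Longrightarrow> vnorm (u - v) \<le> vnorm u + vnorm v"
  using L2_set_triangle_ineq[of "\<lambda>i. u $ i" "\<lambda>i. - v $ i" "{0..<dim_vec v}"]
  unfolding vnorm_eq_L2_set L2_set_def by simp

lemma vnorm_smult: "vnorm (c \<cdot>\<^sub>v v) = \<bar>c\<bar> * vnorm v"
  unfolding vnorm_eq_L2_set L2_set_right_distrib[OF abs_ge_zero]
  unfolding L2_set_def by (simp add: power_mult_distrib)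

lemma abs_index_le_vnorm: "i < dim_vec v \<Longrightarrow> \<bar>v $ i\<bar> \<le> vnorm v"
  using member_le_L2_set[of "{0..<dim_vec v}" i "\<lambda>i. \<bar>v $ i\<bar>"]
  unfolding vnorm_eq_L2_set L2_set_def by simp

lemma vnorm_le_sum_abs: "vnorm v \<le> (\<Sum>i\<in>{0..<dim_vec v}. \<bar>v $ i\<bar>)"
  unfolding vnorm_eq_L2_set by (rule L2_set_le_sum_abs)

lemma vnorm_unit_vec: "i < n \<Longrightarrow> vnorm (unit_vec n i) = 1"
  by (simp add: vnorm_def)

lemma vnorm_mult_normalized:
  assumes "x \<in> carrier_vec (dim_col M)" "vnorm x \<noteq> 0"
  shows "vnorm ((1 / vnorm x) \<cdot>\<^sub>v x) = 1"
    and "vnorm (M *\<^sub>v ((1 / vnorm x) \<cdot>\<^sub>v x)) = vnorm (M *\<^sub>v x) / vnorm x"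
  using assms mult_mat_vec[of M "dim_row M" "dim_col M" x] by (auto simp: vnorm_smult)

lemma vnorm_isometry:
  assumes X: "X \<in> carrier_mat d k" and XX: "transpose_mat X * X = 1\<^sub>m k" and x: "x \<in> carrier_vec k"
  shows "vnorm (X *\<^sub>v x) = vnorm x"
proof -
  have "transpose_mat X *\<^sub>v (X *\<^sub>v x) = (transpose_mat X * X) *\<^sub>v x"
    using X x by (simp add: assoc_mult_mat_vec)
  then have "transpose_mat X *\<^sub>v (X *\<^sub>v x) = x" using XX x by simp
  moreover have "(transpose_mat X *\<^sub>v (X *\<^sub>v x)) \<bullet> x = (X *\<^sub>v x) \<bullet> (X *\<^sub>v x)"
    using X x by (intro transpose_vec_mult_scalar) auto
  ultimately show ?thesis unfolding vnorm_def by simp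
qed

(* The pointwise form of spec_norm M <= c, which needs no boundedness argument to use. *)
definition op_norm_le :: "real mat \<Rightarrow> real \<Rightarrow> bool" where
  "op_norm_le M c \<longleftrightarrow> (\<forall>x \<in> carrier_vec (dim_col M). vnorm (M *\<^sub>v x) \<le> c * vnorm x)"

lemma op_norm_leI:
  "(\<And>x. x \<in> carrier_vec (dim_col M) \<Longrightarrow> vnorm (M *\<^sub>v x) \<le> c * vnorm x) \<Longrightarrow> op_norm_le M c"
  unfolding op_norm_le_def by blast

lemma op_norm_leD: "op_norm_le M c \<Longrightarrow> x \<in> carrier_vec (dim_col M) \<Longrightarrow> vnorm (M *\<^sub>v x) \<le> c * vnorm x"
  unfolding op_norm_le_def by blast

lemma op_norm_le_mono: "op_norm_le M a \<Longrightarrow> a \<le> b \<Longrightarrow> op_norm_le M b"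
  unfolding op_norm_le_def by (meson mult_right_mono order_trans vnorm_nonneg)

lemma op_norm_le_mult:
  assumes A: "A \<in> carrier_mat n m" and B: "B \<in> carrier_mat m p"
    and "op_norm_le A a" "op_norm_le B b" "0 \<le> a"
  shows "op_norm_le (A * B) (a * b)"
proof (rule op_norm_leI)
  fix x :: "real vec" assume "x \<in> carrier_vec (dim_col (A * B))"
  then have x: "x \<in> carrier_vec p" using B by auto
  have "vnorm ((A * B) *\<^sub>v x) = vnorm (A *\<^sub>v (B *\<^sub>v x))" using A B x by simp
  also have "\<dots> \<le> a * vnorm (B *\<^sub>v x)" using assms x by (intro op_norm_leD) auto
  also have "\<dots> \<le> a * (b * vnorm x)" using assms x by (intro mult_left_mono op_norm_leD) auto
  finally show "vnorm ((A * B) *\<^sub>v x) \<le> a * b * vnorm x" by simp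
qed

lemma op_norm_le_diff:
  assumes A: "A \<in> carrier_mat n m" and B: "B \<in> carrier_mat n m"
    and "op_norm_le A a" "op_norm_le B b"
  shows "op_norm_le (A - B) (a + b)"
proof (rule op_norm_leI)
  fix x :: "real vec" assume "x \<in> carrier_vec (dim_col (A - B))"
  then have x: "x \<in> carrier_vec m" using B by auto
  have "vnorm ((A - B) *\<^sub>v x) = vnorm (A *\<^sub>v x - B *\<^sub>v x)"
    using A B x by (simp add: minus_mult_distrib_mat_vec)
  also have "\<dots> \<le> vnorm (A *\<^sub>v x) + vnorm (B *\<^sub>v x)" using A B by (intro vnorm_diff_le) auto
  also have "\<dots> \<le> a * vnorm x + b * vnorm x" using assms x by (intro add_mono op_norm_leD) auto
  finally show "vnorm ((A - B) *\<^sub>v x) \<le> (a + b) * vnorm x" by (simp add: algebra_simps)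
qed

lemma op_norm_le_smult:
  assumes A: "A \<in> carrier_mat n m" and "op_norm_le A a"
  shows "op_norm_le (c \<cdot>\<^sub>m A) (\<bar>c\<bar> * a)"
proof (rule op_norm_leI)
  fix x :: "real vec" assume "x \<in> carrier_vec (dim_col (c \<cdot>\<^sub>m A))"
  then have x: "x \<in> carrier_vec m" using A by auto
  have "(c \<cdot>\<^sub>m A) *\<^sub>v x = c \<cdot>\<^sub>v (A *\<^sub>v x)"
    using A x by (intro eq_vecI) (auto simp: scalar_prod_def sum_distrib_left ac_simps)
  then have "vnorm ((c \<cdot>\<^sub>m A) *\<^sub>v x) = \<bar>c\<bar> * vnorm (A *\<^sub>v x)" by (simp add: vnorm_smult)
  also have "\<dots> \<le> \<bar>c\<bar> * (a * vnorm x)" using assms x by (intro mult_left_mono op_norm_leD) auto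
  finally show "vnorm ((c \<cdot>\<^sub>m A) *\<^sub>v x) \<le> \<bar>c\<bar> * a * vnorm x" by simp
qed

lemma diagm_mult_vec: "x \<in> carrier_vec n \<Longrightarrow> diagm n f *\<^sub>v x = vec n (\<lambda>i. f i * x $ i)"
proof (intro eq_vecI)
  fix i assume x: "x \<in> carrier_vec n" and "i < dim_vec (vec n (\<lambda>i. f i * x $ i))"
  then have i: "i < n" by simp
  have "(diagm n f *\<^sub>v x) $ i = (\<Sum>j\<in>{0..<n}. (if i = j then f i else 0) * x $ j)"
    using i x by (auto simp: diagm_def scalar_prod_def intro!: sum.cong)
  also have "\<dots> = (\<Sum>j\<in>{0..<n}. if i = j then f i * x $ j else 0)"
    by (intro sum.cong) auto
  also have "\<dots> = f i * x $ i" using i by simp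
  finally show "(diagm n f *\<^sub>v x) $ i = vec n (\<lambda>i. f i * x $ i) $ i" using i by simp
qed (auto simp: diagm_def)

lemma op_norm_le_diagm:
  assumes f: "\<And>i. i < n \<Longrightarrow> \<bar>f i\<bar> \<le> c" and c: "0 \<le> c"
  shows "op_norm_le (diagm n f) c"
proof (rule op_norm_leI)
  fix x :: "real vec" assume "x \<in> carrier_vec (dim_col (diagm n f))"
  then have x: "x \<in> carrier_vec n" by (simp add: diagm_def)
  have "vnorm (diagm n f *\<^sub>v x) = L2_set (\<lambda>i. \<bar>f i\<bar> * \<bar>x $ i\<bar>) {0..<n}"
    using x unfolding diagm_mult_vec[OF x] vnorm_eq_L2_set L2_set_def by (simp add: power_mult_distrib)
  also have "\<dots> \<le> L2_set (\<lambda>i. c * \<bar>x $ i\<bar>) {0..<n}"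
    using f by (intro L2_set_mono mult_right_mono) auto
  also have "\<dots> = c * vnorm x"
    using x unfolding L2_set_right_distrib[OF c, symmetric] vnorm_eq_L2_set L2_set_def by simp
  finally show "vnorm (diagm n f *\<^sub>v x) \<le> c * vnorm x" .
qed

lemma op_norm_le_isometry: "X \<in> carrier_mat d k \<Longrightarrow> transpose_mat X * X = 1\<^sub>m k \<Longrightarrow> op_norm_le X 1"
  unfolding op_norm_le_def using vnorm_isometry by auto

lemma bdd_above_spec_norm_set:
  "bdd_above (insert 0 {vnorm (M *\<^sub>v x) | x. x \<in> carrier_vec (dim_col M) \<and> vnorm x = 1})"
proof -
  let ?K = "\<Sum>i\<in>{0..<dim_row M}. \<Sum>j\<in>{0..<dim_col M}. \<bar>M $$ (i, j)\<bar>"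
  have "vnorm (M *\<^sub>v x) \<le> ?K" if x: "x \<in> carrier_vec (dim_col M)" "vnorm x = 1" for x
  proof -
    have "vnorm (M *\<^sub>v x) \<le> (\<Sum>i\<in>{0..<dim_row M}. \<bar>(M *\<^sub>v x) $ i\<bar>)"
      using vnorm_le_sum_abs[of "M *\<^sub>v x"] by simp
    also have "\<dots> \<le> ?K"
    proof (rule sum_mono)
      fix i assume i: "i \<in> {0..<dim_row M}"
      have "\<bar>(M *\<^sub>v x) $ i\<bar> \<le> (\<Sum>j\<in>{0..<dim_col M}. \<bar>M $$ (i, j) * x $ j\<bar>)"
        using i x by (auto simp: scalar_prod_def row_def intro: sum_abs)
      also have "\<dots> \<le> (\<Sum>j\<in>{0..<dim_col M}. \<bar>M $$ (i, j)\<bar>)"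
        using x abs_index_le_vnorm[of _ x] by (intro sum_mono) (auto simp: abs_mult mult_left_le)
      finally show "\<bar>(M *\<^sub>v x) $ i\<bar> \<le> (\<Sum>j\<in>{0..<dim_col M}. \<bar>M $$ (i, j)\<bar>)" .
    qed
    finally show ?thesis .
  qed
  moreover have "0 \<le> ?K" by (intro sum_nonneg) auto
  ultimately show ?thesis unfolding bdd_above_def by blast
qed

lemma op_norm_le_if_spec_norm_le: "spec_norm M \<le> b \<Longrightarrow> op_norm_le M b"
proof (rule op_norm_leI)
  fix x :: "real vec" assume b: "spec_norm M \<le> b" and x: "x \<in> carrier_vec (dim_col M)"
  show "vnorm (M *\<^sub>v x) \<le> b * vnorm x"
  proof (cases "vnorm x = 0")
    case True
    then have "x = 0\<^sub>v (dim_col M)" using x by (simp add: vnorm_eq_0_iff)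
    then have "M *\<^sub>v x = 0\<^sub>v (dim_row M)" by (intro eq_vecI) auto
    then show ?thesis using True by simp
  next
    case False
    note unit = vnorm_mult_normalized[OF x False]
    have "vnorm (M *\<^sub>v x) / vnorm x \<le> spec_norm M"
      unfolding spec_norm_def unit(2)[symmetric]
      by (rule cSup_upper[OF _ bdd_above_spec_norm_set]) (use x unit(1) in auto)
    moreover have "0 < vnorm x" using False vnorm_nonneg[of x] by linarith
    ultimately have "vnorm (M *\<^sub>v x) \<le> spec_norm M * vnorm x" by (simp add: divide_le_eq)
    also have "\<dots> \<le> b * vnorm x" using b by (simp add: mult_right_mono)
    finally show ?thesis .
  qed
qed

lemma sigma_min_mult_le:
  assumes x: "x \<in> carrier_vec (dim_col M)"
  shows "sigma_min M * vnorm x \<le> vnorm (M *\<^sub>v x)"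
proof (cases "vnorm x = 0")
  case False
  note unit = vnorm_mult_normalized[OF x False]
  have "sigma_min M \<le> vnorm (M *\<^sub>v x) / vnorm x"
    unfolding sigma_min_def unit(2)[symmetric]
    by (rule cInf_lower) (use x unit(1) in \<open>auto intro: bdd_belowI[of _ 0]\<close>)
  moreover have "0 < vnorm x" using False vnorm_nonneg[of x] by linarith
  ultimately show ?thesis by (simp add: le_divide_eq)
qed simp

lemma cos_theta_eq_sigma_min:
  assumes "0 < dim_col X" "op_norm_le (transpose_mat V * X) 1"
  shows "cos (theta V X) = sigma_min (transpose_mat V * X)"
proof -
  let ?M = "transpose_mat V * X" and ?e = "unit_vec (dim_col X) 0"
  have e: "?e \<in> carrier_vec (dim_col ?M)" "vnorm ?e = 1" using assms(1) vnorm_unit_vec by auto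
  have "0 \<le> sigma_min ?M" unfolding sigma_min_def
    by (rule cInf_greatest) (use e in blast, auto)
  moreover have "sigma_min ?M \<le> vnorm (?M *\<^sub>v ?e)" unfolding sigma_min_def
    by (rule cInf_lower) (use e in \<open>auto intro: bdd_belowI[of _ 0]\<close>)
  moreover have "vnorm (?M *\<^sub>v ?e) \<le> 1" using op_norm_leD[OF assms(2) e(1)] e(2) by simp
  ultimately show ?thesis unfolding theta_def by (intro cos_arccos) auto
qed

section \<open>Inverses\<close>

lemma inverts_minv:
  assumes "invertible_mat M"
  shows "inverts_mat M (minv M) \<and> inverts_mat (minv M) M"
proof -
  obtain B where "inverts_mat M B \<and> inverts_mat B M" using assms unfolding invertible_mat_def by auto
  then show ?thesis
    using someI[of "\<lambda>B. inverts_mat M B \<and> inverts_mat B M" B] assms unfolding minv_def by simp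
qed

lemma minv_carrier: "M \<in> carrier_mat n n \<Longrightarrow> minv M \<in> carrier_mat n n"
proof (cases "invertible_mat M")
  case True
  assume M: "M \<in> carrier_mat n n"
  then have "dim_col (minv M) = n" "dim_row (minv M) = n"
    using inverts_minv[OF True] unfolding inverts_mat_def
    by (metis carrier_matD index_mult_mat index_one_mat)+
  then show ?thesis by auto
qed (auto simp: minv_def)

lemma
  assumes "invertible_mat M" and M: "M \<in> carrier_mat n n"
  shows mult_minv_mat: "M * minv M = 1\<^sub>m n" and minv_mult_mat: "minv M * M = 1\<^sub>m n"
  using inverts_minv[OF assms(1)] M minv_carrier[OF M] unfolding inverts_mat_def by auto

lemma
  fixes M B :: "real mat"
  assumes M: "M \<in> carrier_mat n n" and B: "B \<in> carrier_mat n n" and MB: "M * B = 1\<^sub>m n"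
  shows invertible_if_right_inverse: "invertible_mat M" and minv_eq_right_inverse: "minv M = B"
proof -
  have BM: "B * M = 1\<^sub>m n" by (rule mat_mult_left_right_inverse[OF M B MB])
  show inv: "invertible_mat M"
    unfolding invertible_mat_def inverts_mat_def using M B MB BM by auto
  have "minv M = (minv M * M) * B"
    using M B minv_carrier[OF M] by (simp add: assoc_mult_mat[of _ n n _ n _ n] MB)
  then show "minv M = B" using minv_mult_mat[OF inv M] B by simp
qed

lemma minv_minv:
  fixes M :: "real mat"
  assumes "invertible_mat M" and M: "M \<in> carrier_mat n n"
  shows "minv (minv M) = M"
  using minv_eq_right_inverse[of "minv M" n M] minv_carrier[OF M] M minv_mult_mat[OF assms] by simp

lemma
  fixes M Y :: "real mat"
  assumes inv: "invertible_mat M" and M: "M \<in> carrier_mat n n" and Y: "Y \<in> carrier_mat n m"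
  shows minv_mult_cancel_left: "minv M * (M * Y) = Y"
    and mult_minv_cancel_left: "M * (minv M * Y) = Y"
  using assoc_mult_mat[of "minv M" n n M n Y m] assoc_mult_mat[of M n n "minv M" n Y m]
    minv_carrier[OF M] M Y by (simp_all add: minv_mult_mat[OF inv M] mult_minv_mat[OF inv M])

lemma invertible_mult_mat:
  fixes A B :: "real mat"
  assumes A: "A \<in> carrier_mat n n" and B: "B \<in> carrier_mat n n"
    and "invertible_mat A" "invertible_mat B"
  shows "invertible_mat (A * B)"
proof (rule invertible_if_right_inverse)
  have "(A * B) * (minv B * minv A) = A * (B * (minv B * minv A))"
    using A B minv_carrier[OF A] minv_carrier[OF B] by (simp add: assoc_mult_mat[of _ n n _ n _ n])
  also have "\<dots> = 1\<^sub>m n"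
    using assms minv_carrier[OF A] by (simp add: mult_minv_cancel_left mult_minv_mat)
  finally show "(A * B) * (minv B * minv A) = 1\<^sub>m n" .
qed (use A B minv_carrier[OF A] minv_carrier[OF B] in auto)

lemma invertible_mult_factors:
  fixes A B :: "real mat"
  assumes A: "A \<in> carrier_mat n n" and B: "B \<in> carrier_mat n n" and inv: "invertible_mat (A * B)"
  shows "invertible_mat A" "invertible_mat B"
proof -
  have AB: "A * B \<in> carrier_mat n n" using A B by auto
  note C = minv_carrier[OF AB]
  have "A * (B * minv (A * B)) = (A * B) * minv (A * B)"
    using A B C by (intro assoc_mult_mat[symmetric]) auto
  then have "A * (B * minv (A * B)) = 1\<^sub>m n" using mult_minv_mat[OF inv AB] by simp
  then show "invertible_mat A" using A B C by (intro invertible_if_right_inverse) auto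
  have "(minv (A * B) * A) * B = minv (A * B) * (A * B)"
    using A B C by (intro assoc_mult_mat) auto
  then have "(minv (A * B) * A) * B = 1\<^sub>m n" using minv_mult_mat[OF inv AB] by simp
  then have "B * (minv (A * B) * A) = 1\<^sub>m n"
    by (rule mat_mult_left_right_inverse[OF mult_carrier_mat[OF C A] B])
  then show "invertible_mat B" using A B C by (intro invertible_if_right_inverse) auto
qed

lemma
  fixes M :: "real mat"
  assumes M: "M \<in> carrier_mat n n" and \<rho>: "0 < \<rho>"
    and lower: "\<And>x. x \<in> carrier_vec n \<Longrightarrow> \<rho> * vnorm x \<le> vnorm (M *\<^sub>v x)"
  shows invertible_if_lower_bound: "invertible_mat M"
    and op_norm_le_minv_if_lower_bound: "op_norm_le (minv M) (1 / \<rho>)"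
proof -
  have "det M \<noteq> 0"
  proof
    assume "det M = 0"
    then obtain v where v: "v \<in> carrier_vec n" "v \<noteq> 0\<^sub>v n" "M *\<^sub>v v = 0\<^sub>v n"
      using det_0_iff_vec_prod_zero[OF M] by auto
    then have "\<rho> * vnorm v \<le> 0" using lower[OF v(1)] by simp
    then have "vnorm v = 0" using \<rho> by (simp add: mult_le_0_iff order.antisym)
    then show False using v by (simp add: vnorm_eq_0_iff)
  qed
  then obtain B where "B \<in> carrier_mat n n" "M * B = 1\<^sub>m n"
    using det_non_zero_imp_unit[OF M] unfolding Units_def ring_mat_def by auto
  then show inv: "invertible_mat M" using M by (intro invertible_if_right_inverse)
  show "op_norm_le (minv M) (1 / \<rho>)"
  proof (rule op_norm_leI)
    fix y :: "real vec" assume "y \<in> carrier_vec (dim_col (minv M))"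
    then have y: "y \<in> carrier_vec n" using minv_carrier[OF M] by auto
    have "M *\<^sub>v (minv M *\<^sub>v y) = y"
      using y M minv_carrier[OF M] mult_minv_mat[OF inv M]
      by (simp add: assoc_mult_mat_vec[of _ n n _ n, symmetric])
    then have "\<rho> * vnorm (minv M *\<^sub>v y) \<le> vnorm y"
      using lower[of "minv M *\<^sub>v y"] minv_carrier[OF M] y by auto
    then show "vnorm (minv M *\<^sub>v y) \<le> 1 / \<rho> * vnorm y" using \<rho> by (simp add: field_simps)
  qed
qed

lemma
  fixes M :: "real mat"
  assumes M: "M \<in> carrier_mat n n" and near: "op_norm_le (M - a \<cdot>\<^sub>m 1\<^sub>m n) q" and gap: "q < a"
  shows invertible_if_near_scalar: "invertible_mat M"
    and op_norm_le_minv_if_near_scalar: "op_norm_le (minv M) (1 / (a - q))"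
proof -
  have "(a - q) * vnorm x \<le> vnorm (M *\<^sub>v x)" if x: "x \<in> carrier_vec n" for x
  proof -
    have "a \<cdot>\<^sub>v x = a \<cdot>\<^sub>v (1\<^sub>m n *\<^sub>v x)" using x by simp
    also have "\<dots> = (a \<cdot>\<^sub>m 1\<^sub>m n) *\<^sub>v x" using x by auto
    finally have "(M - a \<cdot>\<^sub>m 1\<^sub>m n) *\<^sub>v x = M *\<^sub>v x - a \<cdot>\<^sub>v x"
      using M x by (simp add: minus_mult_distrib_mat_vec[of _ n n])
    then have "M *\<^sub>v x - (M - a \<cdot>\<^sub>m 1\<^sub>m n) *\<^sub>v x = a \<cdot>\<^sub>v x"
      using M x by (intro eq_vecI) auto
    then have "vnorm (a \<cdot>\<^sub>v x) = vnorm (M *\<^sub>v x - (M - a \<cdot>\<^sub>m 1\<^sub>m n) *\<^sub>v x)" by simp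
    also have "\<dots> \<le> vnorm (M *\<^sub>v x) + vnorm ((M - a \<cdot>\<^sub>m 1\<^sub>m n) *\<^sub>v x)"
      using M by (intro vnorm_diff_le) auto
    also have "\<dots> \<le> vnorm (M *\<^sub>v x) + q * vnorm x" using near M x by (auto intro: op_norm_leD)
    finally have "\<bar>a\<bar> * vnorm x \<le> vnorm (M *\<^sub>v x) + q * vnorm x" by (simp add: vnorm_smult)
    moreover have "a * vnorm x \<le> \<bar>a\<bar> * vnorm x" by (simp add: mult_right_mono)
    ultimately show ?thesis by (simp add: algebra_simps)
  qed
  moreover have "0 < a - q" using gap by simp
  ultimately show "invertible_mat M" "op_norm_le (minv M) (1 / (a - q))"
    using invertible_if_lower_bound[OF M] op_norm_le_minv_if_lower_bound[OF M] by blast+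
qed

lemma op_norm_le_mult_minv:
  assumes A: "A \<in> carrier_mat m n" and P: "P \<in> carrier_mat n n" and inv: "invertible_mat P"
    and A_bound: "op_norm_le A (a * \<sigma>)" and a: "0 \<le> a"
    and P_lower: "\<And>x. x \<in> carrier_vec n \<Longrightarrow> \<sigma> * vnorm x \<le> vnorm (P *\<^sub>v x)"
  shows "op_norm_le (A * minv P) a"
proof (rule op_norm_leI)
  note P' = minv_carrier[OF P]
  fix y :: "real vec" assume "y \<in> carrier_vec (dim_col (A * minv P))"
  then have y: "y \<in> carrier_vec n" using P' by auto
  let ?x = "minv P *\<^sub>v y"
  have x: "?x \<in> carrier_vec n" using P' y by auto
  have "P *\<^sub>v ?x = y"
    using P P' y mult_minv_mat[OF inv P] by (simp add: assoc_mult_mat_vec[of _ n n _ n, symmetric])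
  have "vnorm ((A * minv P) *\<^sub>v y) = vnorm (A *\<^sub>v ?x)" using A P' y by simp
  also have "\<dots> \<le> a * \<sigma> * vnorm ?x" using A_bound A x by (intro op_norm_leD) auto
  also have "\<dots> \<le> a * vnorm y"
    using P_lower[OF x] \<open>P *\<^sub>v ?x = y\<close> a by (simp add: mult.assoc mult_left_mono)
  finally show "vnorm ((A * minv P) *\<^sub>v y) \<le> a * vnorm y" .
qed

section \<open>Diagonal matrices and eigenvector blocks\<close>

lemma diagm_carrier [simp]: "diagm n f \<in> carrier_mat n n"
  by (simp add: diagm_def)

lemma diagm_mult_diagm: "diagm n f * diagm n g = diagm n (\<lambda>i. f i * g i)"
proof (rule eq_matI)
  fix i j assume "i < dim_row (diagm n (\<lambda>i. f i * g i))" "j < dim_col (diagm n (\<lambda>i. f i * g i))"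
  then have ij: "i < n" "j < n" by (auto simp: diagm_def)
  have "(diagm n f * diagm n g) $$ (i, j)
      = (\<Sum>l\<in>{0..<n}. (if i = l then f i else 0) * (if l = j then g l else 0))"
    using ij by (auto simp: diagm_def scalar_prod_def intro!: sum.cong)
  also have "\<dots> = (\<Sum>l\<in>{0..<n}. if l = i then (if i = j then f i * g i else 0) else 0)"
    by (intro sum.cong) auto
  finally show "(diagm n f * diagm n g) $$ (i, j) = diagm n (\<lambda>i. f i * g i) $$ (i, j)"
    using ij by (simp add: diagm_def)
qed (auto simp: diagm_def)

lemma
  assumes "\<And>i. i < n \<Longrightarrow> f i \<noteq> 0"
  shows invertible_diagm: "invertible_mat (diagm n f)"
    and minv_diagm: "minv (diagm n f) = diagm n (\<lambda>i. 1 / f i)"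
proof -
  have "diagm n f * diagm n (\<lambda>i. 1 / f i) = 1\<^sub>m n"
    unfolding diagm_mult_diagm using assms by (intro eq_matI) (auto simp: diagm_def)
  then show "invertible_mat (diagm n f)" "minv (diagm n f) = diagm n (\<lambda>i. 1 / f i)"
    using invertible_if_right_inverse[of "diagm n f" n "diagm n (\<lambda>i. 1 / f i)"]
      minv_eq_right_inverse[of "diagm n f" n "diagm n (\<lambda>i. 1 / f i)"]
    by simp_all
qed

lemma transpose_eigenvectors_mult:
  fixes A V :: "real mat"
  assumes A: "A \<in> carrier_mat d d" "transpose_mat A = A" and V: "V \<in> carrier_mat d m"
    and eig: "\<And>i. i < m \<Longrightarrow> A *\<^sub>v col V i = \<mu> i \<cdot>\<^sub>v col V i"
  shows "transpose_mat V * A = diagm m \<mu> * transpose_mat V"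
proof (rule eq_matI)
  fix i j assume "i < dim_row (diagm m \<mu> * transpose_mat V)" "j < dim_col (diagm m \<mu> * transpose_mat V)"
  then have i: "i < m" and j: "j < d" using V by (auto simp: diagm_def)
  have "row A j = col A j" using row_transpose[of j A] A j by auto
  then have "(transpose_mat V * A) $$ (i, j) = row A j \<bullet> col V i"
    using i j A V by (simp add: comm_scalar_prod[of _ d])
  also have "\<dots> = (A *\<^sub>v col V i) $ j" using A j by simp
  also have "\<dots> = \<mu> i * V $$ (j, i)" using eig[OF i] V i j by simp
  also have "\<dots> = (\<Sum>l\<in>{0..<m}. if l = i then \<mu> i * V $$ (j, i) else 0)" using i by simp
  also have "\<dots> = (\<Sum>l\<in>{0..<m}. (if i = l then \<mu> i else 0) * V $$ (j, l))"
    by (intro sum.cong) auto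
  also have "\<dots> = (diagm m \<mu> * transpose_mat V) $$ (i, j)"
    using i j V by (auto simp: diagm_def scalar_prod_def intro!: sum.cong)
  finally show "(transpose_mat V * A) $$ (i, j) = (diagm m \<mu> * transpose_mat V) $$ (i, j)" .
qed (use A V in \<open>auto simp: diagm_def\<close>)

lemma dim_Ufirst [simp]: "dim_row (Ufirst k U) = dim_row U" "dim_col (Ufirst k U) = k"
  by (simp_all add: Ufirst_def)

lemma dim_Urest [simp]: "dim_row (Urest k U) = dim_row U" "dim_col (Urest k U) = dim_col U - k"
  by (simp_all add: Urest_def)

lemma Ufirst_carrier [simp]: "U \<in> carrier_mat d d \<Longrightarrow> Ufirst k U \<in> carrier_mat d k"
  by (simp add: Ufirst_def)

lemma Urest_carrier [simp]: "U \<in> carrier_mat d d \<Longrightarrow> Urest k U \<in> carrier_mat d (d - k)"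
  by (simp add: Urest_def)

lemma Lam_first_carrier [simp]: "Lam_first k lam \<in> carrier_mat k k"
  by (simp add: Lam_first_def)

lemma Lam_rest_carrier [simp]: "Lam_rest d k lam \<in> carrier_mat (d - k) (d - k)"
  by (simp add: Lam_rest_def)

lemma col_Ufirst: "i < k \<Longrightarrow> col (Ufirst k U) i = col U i"
  by (intro eq_vecI) (auto simp: Ufirst_def col_def)

lemma col_Urest: "i < dim_col U - k \<Longrightarrow> col (Urest k U) i = col U (k + i)"
  by (intro eq_vecI) (auto simp: Urest_def col_def)

lemma op_norm_le_transpose_Ufirst:
  fixes U :: "real mat"
  assumes U: "U \<in> carrier_mat d d" "transpose_mat U * U = 1\<^sub>m d" and k: "k \<le> d"
  shows "op_norm_le (transpose_mat (Ufirst k U)) 1"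
proof (rule op_norm_leI)
  fix v :: "real vec" assume "v \<in> carrier_vec (dim_col (transpose_mat (Ufirst k U)))"
  then have v: "v \<in> carrier_vec d" using U by simp
  have "U * transpose_mat U = 1\<^sub>m d"
    using mat_mult_left_right_inverse[of "transpose_mat U" d U] U by auto
  then have "vnorm (transpose_mat U *\<^sub>v v) = vnorm v"
    using U v by (intro vnorm_isometry[of _ d d]) auto
  moreover have "(transpose_mat (Ufirst k U) *\<^sub>v v) $ i = (transpose_mat U *\<^sub>v v) $ i" if "i < k" for i
    using that k U by (simp add: col_Ufirst)
  then have "vnorm (transpose_mat (Ufirst k U) *\<^sub>v v) = L2_set (\<lambda>i. (transpose_mat U *\<^sub>v v) $ i) {0..<k}"
    unfolding vnorm_eq_L2_set using U by (auto intro: L2_set_cong)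
  moreover have "\<dots> \<le> vnorm (transpose_mat U *\<^sub>v v)"
    unfolding vnorm_eq_L2_set L2_set_def using U k by (auto intro!: sum_mono2)
  ultimately show "vnorm (transpose_mat (Ufirst k U) *\<^sub>v v) \<le> 1 * vnorm v" by simp
qed

lemma intertwining_mult:
  fixes W L A Y :: "'a :: comm_ring mat"
  assumes "W \<in> carrier_mat m d" "L \<in> carrier_mat m m" "A \<in> carrier_mat d d" "Y \<in> carrier_mat d k"
    and "W * A = L * W"
  shows "W * (A * Y) = L * (W * Y)"
  using assms assoc_mult_mat[of W m d A d Y k] assoc_mult_mat[of L m m W d Y k] by simp

section \<open>The accelerated noisy power method\<close>

locale anpm =
  fixes d k :: nat and \<beta> :: real and A U :: "real mat" and lam :: "nat \<Rightarrow> real"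
    and X R Xi :: "nat \<Rightarrow> real mat"
  assumes k_pos: "1 \<le> k" and k_less: "k < d"
    and A_carrier: "A \<in> carrier_mat d d" and A_symmetric: "transpose_mat A = A"
    and U_carrier: "U \<in> carrier_mat d d" and U_orthogonal: "transpose_mat U * U = 1\<^sub>m d"
    and eigenvectors: "\<And>i. i < d \<Longrightarrow> A *\<^sub>v col U i = lam i \<cdot>\<^sub>v col U i"
    and lam_sorted: "\<And>i j. i \<le> j \<Longrightarrow> j < d \<Longrightarrow> lam j \<le> lam i"
    and beta_pos: "0 < \<beta>" and beta_gap: "2 * sqrt \<beta> < lam (k - 1)"
    and X0_stiefel: "X 0 \<in> stiefel d k" and X0_angle: "0 < cos (theta (Ufirst k U) (X 0))"
    and Xi_carrier: "\<And>t. Xi t \<in> carrier_mat d k"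
    and first_step: "is_QR k ((1/2) \<cdot>\<^sub>m (A * X 0) + Xi 0) (X 1) (R 1)"
    and later_step: "\<And>t. 1 \<le> t \<Longrightarrow>
      is_QR k (A * X t - \<beta> \<cdot>\<^sub>m (X (t - 1) * minv (R t)) + Xi t) (X (t + 1)) (R (t + 1))"
    and perturbation: "\<And>t. spec_norm (transpose_mat (Ufirst k U) * Xi t)
      \<le> (1/32) * (lam (k - 1) - 2 * sqrt \<beta>) * cos (theta (Ufirst k U) (X t))"
begin

abbreviation "Uk \<equiv> transpose_mat (Ufirst k U)"
abbreviation "Ur \<equiv> transpose_mat (Urest k U)"
abbreviation "Lk \<equiv> Lam_first k lam"
abbreviation "Lr \<equiv> Lam_rest d k lam"

definition "P t = Uk * X t"
definition "Q t = Ur * X t"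
definition "E = (\<lambda>t. Em k U lam (Xi t) (X t))"
abbreviation "G \<equiv> Gm k lam \<beta> E"
abbreviation "C \<equiv> Cm k lam \<beta> E"

definition "Ginv t = (if t = 0 then (1/2) \<cdot>\<^sub>m 1\<^sub>m k + E 0
                      else 1\<^sub>m k - \<beta> \<cdot>\<^sub>m (minv Lk * G (t - 1) * minv Lk) + E t)"

fun S :: "nat \<Rightarrow> real mat" where
  "S 0 = minv (P 0)"
| "S (Suc t) = R (Suc t) * S t"

definition "r = sqrt \<beta> / lam (k - 1)"

lemma G_eq_minv_Ginv: "G t = minv (Ginv t)"
  by (cases t) (simp_all add: Ginv_def)

lemma lam_k_le: "i < k \<Longrightarrow> lam (k - 1) \<le> lam i"
  using lam_sorted k_less by simp

lemma lam_k_pos: "0 < lam (k - 1)"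
  using beta_gap beta_pos real_sqrt_gt_zero[of \<beta>] by linarith

lemma r_pos: "0 < r" and r_less_half: "r < 1/2"
  unfolding r_def using beta_pos beta_gap lam_k_pos by (auto simp: field_simps)

lemma beta_eq: "\<beta> = (r * lam (k - 1))\<^sup>2"
  unfolding r_def using beta_pos lam_k_pos by simp

lemma Lk_invertible: "invertible_mat Lk" and minv_Lk: "minv Lk = diagm k (\<lambda>i. 1 / lam i)"
proof -
  have "lam i \<noteq> 0" if "i < k" for i using lam_k_le[OF that] lam_k_pos by linarith
  then show "invertible_mat Lk" "minv Lk = diagm k (\<lambda>i. 1 / lam i)"
    unfolding Lam_first_def by (simp_all add: invertible_diagm minv_diagm)
qed

lemma Lk_mult_minv_Lk: "Y \<in> carrier_mat k k \<Longrightarrow> Lk * (minv Lk * Y) = Y"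
  by (rule mult_minv_cancel_left[OF Lk_invertible Lam_first_carrier])

lemma minv_Lk_mult_Lk: "Y \<in> carrier_mat k k \<Longrightarrow> minv Lk * (Lk * Y) = Y"
  by (rule minv_mult_cancel_left[OF Lk_invertible Lam_first_carrier])

lemma op_norm_le_minv_Lk: "op_norm_le (minv Lk) (1 / lam (k - 1))"
proof (unfold minv_Lk, rule op_norm_le_diagm)
  fix i assume "i < k"
  then have "lam (k - 1) \<le> lam i" by (rule lam_k_le)
  then show "\<bar>1 / lam i\<bar> \<le> 1 / lam (k - 1)" using lam_k_pos by (simp add: frac_le)
qed (use lam_k_pos in simp)

lemma QR_factor_carriers:
  assumes "1 \<le> t"
  shows "X t \<in> carrier_mat d k \<and> R t \<in> carrier_mat k k \<and> transpose_mat (X t) * X t = 1\<^sub>m k"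
proof -
  have "\<exists>Y. dim_row Y = d \<and> is_QR k Y (X t) (R t)"
  proof (cases "t = 1")
    case True
    then show ?thesis
      using first_step Xi_carrier[of 0] by (intro exI[of _ "(1/2) \<cdot>\<^sub>m (A * X 0) + Xi 0"]) simp
  next
    case False
    then have "t = (t - 1) + 1" "1 \<le> t - 1" using assms by auto
    then show ?thesis
      using later_step[of "t - 1"] Xi_carrier[of "t - 1"]
      by (intro exI[of _ "A * X (t - 1) - \<beta> \<cdot>\<^sub>m (X (t - 1 - 1) * minv (R (t - 1))) + Xi (t - 1)"]) simp
  qed
  then show ?thesis unfolding is_QR_def by auto
qed

lemma X_carrier [simp]: "X t \<in> carrier_mat d k"
  using QR_factor_carriers[of t] X0_stiefel by (cases t) (auto simp: stiefel_def)

lemma X_orthonormal: "transpose_mat (X t) * X t = 1\<^sub>m k"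
  using QR_factor_carriers[of t] X0_stiefel by (cases t) (auto simp: stiefel_def)

lemma R_Suc_carrier [simp]: "R (Suc t) \<in> carrier_mat k k"
  using QR_factor_carriers[of "Suc t"] by simp

lemma dim_U [simp]: "dim_row U = d" "dim_col U = d"
  using carrier_matD[OF U_carrier] by simp_all

declare U_carrier [simp] Xi_carrier [simp]

lemma Uk_carrier: "Uk \<in> carrier_mat k d" and Ur_carrier: "Ur \<in> carrier_mat (d - k) d"
  by simp_all

lemma P_carrier [simp]: "P t \<in> carrier_mat k k"
  unfolding P_def by (rule mult_carrier_mat[of _ k d]) auto

lemma Q_carrier [simp]: "Q t \<in> carrier_mat (d - k) k"
  unfolding Q_def by (rule mult_carrier_mat[of _ "d - k" d]) auto

lemma minv_P_carrier [simp]: "minv (P t) \<in> carrier_mat k k"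
  by (simp add: minv_carrier)

lemma minv_Lk_carrier [simp]: "minv Lk \<in> carrier_mat k k"
  by (simp add: minv_carrier)

lemma minv_R_Suc_carrier [simp]: "minv (R (Suc t)) \<in> carrier_mat k k"
  by (simp add: minv_carrier)

lemma E_eq: "E t = minv Lk * (Uk * Xi t) * minv (P t)"
  unfolding E_def Em_def P_def ..

lemma Uk_Xi_carrier [simp]: "Uk * Xi t \<in> carrier_mat k k"
  by (rule mult_carrier_mat[of _ k d]) simp_all

lemma Ur_Xi_carrier [simp]: "Ur * Xi t \<in> carrier_mat (d - k) k"
  by (rule mult_carrier_mat[of _ "d - k" d]) simp_all

lemma E_carrier [simp]: "E t \<in> carrier_mat k k"
  unfolding E_eq by (rule mult_carrier_mat[OF mult_carrier_mat[OF minv_Lk_carrier Uk_Xi_carrier]]) simp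

lemma dim_E [simp]: "dim_row (E t) = k" "dim_col (E t) = k"
  using carrier_matD[OF E_carrier] by simp_all

lemma G_carrier [simp]: "G t \<in> carrier_mat k k"
  by (cases t) (auto intro!: minv_carrier)

lemma Ginv_carrier [simp]: "Ginv t \<in> carrier_mat k k"
  unfolding Ginv_def by (auto intro!: mult_carrier_mat[of _ k k])

lemma C_carrier [simp]: "C t \<in> carrier_mat k k"
  by (induction t) (auto intro!: minv_carrier mult_carrier_mat[of _ k k])

lemma S_carrier [simp]: "S t \<in> carrier_mat k k"
  by (induction t) (auto intro!: mult_carrier_mat[of _ k k])

lemma Uk_mult_A: "Uk * A = Lk * Uk"
  unfolding Lam_first_def using A_carrier A_symmetric U_carrier k_less
  by (intro transpose_eigenvectors_mult) (auto simp: col_Ufirst eigenvectors)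

lemma Ur_mult_A: "Ur * A = Lr * Ur"
  unfolding Lam_rest_def using A_carrier A_symmetric U_carrier k_less
  by (intro transpose_eigenvectors_mult) (auto simp: col_Urest eigenvectors)

lemma projected_first_step:
  assumes W: "W \<in> carrier_mat m d" and L: "L \<in> carrier_mat m m" and WA: "W * A = L * W"
  shows "W * X 1 * R 1 = (1/2) \<cdot>\<^sub>m (L * (W * X 0)) + W * Xi 0"
proof -
  have QR: "X 1 * R 1 = (1/2) \<cdot>\<^sub>m (A * X 0) + Xi 0"
    using first_step by (simp add: is_QR_def)
  have "W * X 1 * R 1 = W * (X 1 * R 1)"
    using W R_Suc_carrier[of 0] by (intro assoc_mult_mat[of _ m d _ k _ k]) auto
  also have "\<dots> = (1/2) \<cdot>\<^sub>m (W * (A * X 0)) + W * Xi 0"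
    unfolding QR using W A_carrier
    by (simp add: mult_add_distrib_mat[of _ m d _ k] mult_smult_distrib[of _ m d _ k])
  finally show ?thesis
    unfolding intertwining_mult[OF W L A_carrier X_carrier WA] .
qed

lemma projected_step:
  assumes W: "W \<in> carrier_mat m d" and L: "L \<in> carrier_mat m m" and WA: "W * A = L * W"
    and t: "1 \<le> t"
  shows "W * X (t + 1) * R (t + 1) = L * (W * X t) - \<beta> \<cdot>\<^sub>m (W * X (t - 1) * minv (R t)) + W * Xi t"
proof -
  have Rt: "minv (R t) \<in> carrier_mat k k" using QR_factor_carriers[OF t] by (simp add: minv_carrier)
  have QR: "X (t + 1) * R (t + 1) = A * X t - \<beta> \<cdot>\<^sub>m (X (t - 1) * minv (R t)) + Xi t"
    using later_step[OF t] by (simp add: is_QR_def)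
  have "W * X (t + 1) * R (t + 1) = W * (X (t + 1) * R (t + 1))"
    using W R_Suc_carrier[of t] by (intro assoc_mult_mat[of _ m d _ k _ k]) auto
  also have "\<dots> = W * (A * X t) - \<beta> \<cdot>\<^sub>m (W * (X (t - 1) * minv (R t))) + W * Xi t"
    unfolding QR using W mult_carrier_mat[OF A_carrier X_carrier] mult_carrier_mat[OF X_carrier Rt]
    by (simp add: mult_add_distrib_mat[of _ m d _ k] mult_minus_distrib_mat[of _ m d _ k]
        mult_smult_distrib[of _ m d _ k] minus_carrier_mat)
  also have "W * (X (t - 1) * minv (R t)) = W * X (t - 1) * minv (R t)"
    using W Rt by (intro assoc_mult_mat[of _ m d _ k _ k, symmetric]) auto
  finally show ?thesis
    unfolding intertwining_mult[OF W L A_carrier X_carrier WA] .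
qed

lemma P_first_step: "P 1 * R 1 = (1/2) \<cdot>\<^sub>m (Lk * P 0) + Uk * Xi 0"
  unfolding P_def by (rule projected_first_step[OF Uk_carrier Lam_first_carrier Uk_mult_A])

lemma Q_first_step: "Q 1 * R 1 = (1/2) \<cdot>\<^sub>m (Lr * Q 0) + Ur * Xi 0"
  unfolding Q_def by (rule projected_first_step[OF Ur_carrier Lam_rest_carrier Ur_mult_A])

lemma P_step: "1 \<le> t \<Longrightarrow> P (t + 1) * R (t + 1) = Lk * P t - \<beta> \<cdot>\<^sub>m (P (t - 1) * minv (R t)) + Uk * Xi t"
  unfolding P_def by (rule projected_step[OF Uk_carrier Lam_first_carrier Uk_mult_A])

lemma Q_step: "1 \<le> t \<Longrightarrow> Q (t + 1) * R (t + 1) = Lr * Q t - \<beta> \<cdot>\<^sub>m (Q (t - 1) * minv (R t)) + Ur * Xi t"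
  unfolding Q_def by (rule projected_step[OF Ur_carrier Lam_rest_carrier Ur_mult_A])

(* Ring laws for k x k matrices with the dimensions fixed, so that simp can discharge
   the carrier side conditions. *)
lemmas k_square_simps =
  assoc_mult_mat[of _ k k _ k _ k] add_mult_distrib_mat[of _ k k _ _ k]
  mult_add_distrib_mat[of _ k k _ k] minus_mult_distrib_mat[of _ k k _ _ k]
  mult_minus_distrib_mat[of _ k k _ k] mult_smult_assoc_mat[of _ k k _ k]
  mult_smult_distrib[of _ k k _ k] mult_carrier_mat[of _ k k _ k] minus_carrier_mat
  right_mult_one_mat[of _ k k]

lemmas rest_rows_simps =
  assoc_mult_mat[of _ "d - k" k _ k _ k] add_mult_distrib_mat[of _ "d - k" k _ _ k]
  minus_mult_distrib_mat[of _ "d - k" k _ _ k] mult_smult_assoc_mat[of _ "d - k" k _ k]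
  assoc_mult_mat[of _ "d - k" "d - k" _ k _ k] mult_carrier_mat[of _ "d - k" k _ k]
  mult_carrier_mat[of _ "d - k" "d - k" _ k] minus_carrier_mat

lemma op_norm_le_P: "op_norm_le (P t) 1"
  using op_norm_le_mult[OF Uk_carrier X_carrier
      op_norm_le_transpose_Ufirst[OF U_carrier U_orthogonal less_imp_le[OF k_less]]
      op_norm_le_isometry[OF X_carrier X_orthonormal]]
  unfolding P_def by simp

lemma cos_theta_X: "cos (theta (Ufirst k U) (X t)) = sigma_min (P t)"
  using k_pos op_norm_le_P[of t] carrier_matD[OF X_carrier[of t]] unfolding P_def
  by (intro cos_theta_eq_sigma_min) auto

lemma P0_invertible: "invertible_mat (P 0)"
  using X0_angle sigma_min_mult_le[of _ "P 0"] carrier_matD[OF P_carrier] unfolding cos_theta_X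
  by (intro invertible_if_lower_bound[OF P_carrier, where \<rho> = "sigma_min (P 0)"]) auto

lemma op_norm_le_E:
  assumes P_inv: "invertible_mat (P t)"
  shows "op_norm_le (E t) ((1 - 2 * r) / 32)"
proof -
  let ?\<sigma> = "sigma_min (P t)" and ?lk = "lam (k - 1)"
  have "op_norm_le (Uk * Xi t) ((?lk - 2 * sqrt \<beta>) / 32 * ?\<sigma>)"
    using perturbation[of t] unfolding cos_theta_X by (intro op_norm_le_if_spec_norm_le) simp
  then have "op_norm_le (minv Lk * (Uk * Xi t)) (1 / ?lk * ((?lk - 2 * sqrt \<beta>) / 32 * ?\<sigma>))"
    using lam_k_pos by (intro op_norm_le_mult[OF minv_Lk_carrier Uk_Xi_carrier op_norm_le_minv_Lk]) auto
  also have "1 / ?lk * ((?lk - 2 * sqrt \<beta>) / 32 * ?\<sigma>) = (1 - 2 * r) / 32 * ?\<sigma>"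
    unfolding r_def using lam_k_pos by (simp add: field_simps)
  finally show ?thesis
    unfolding E_eq using r_less_half sigma_min_mult_le[of _ "P t"] carrier_matD[OF P_carrier]
    by (intro op_norm_le_mult_minv[OF mult_carrier_mat[OF minv_Lk_carrier Uk_Xi_carrier]
          P_carrier P_inv]) auto
qed

lemma Ginv_0_near_half: "op_norm_le (Ginv 0 - (1/2) \<cdot>\<^sub>m 1\<^sub>m k) ((1 - 2 * r) / 32)"
proof -
  have "Ginv 0 - (1/2) \<cdot>\<^sub>m 1\<^sub>m k = E 0" unfolding Ginv_def by (intro eq_matI) auto
  then show ?thesis using op_norm_le_E[OF P0_invertible] by simp
qed

lemma Ginv_Suc_near_one:
  assumes P_inv: "invertible_mat (P (Suc t))" and G_t: "op_norm_le (G t) (1 / r)"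
  shows "op_norm_le (Ginv (Suc t) - 1 \<cdot>\<^sub>m 1\<^sub>m k) ((1 - 2 * r) / 32 + r)"
proof -
  let ?B = "minv Lk * G t * minv Lk" and ?lk = "lam (k - 1)"
  have B: "?B \<in> carrier_mat k k" by (auto intro!: mult_carrier_mat[of _ k k])
  have "op_norm_le (minv Lk * G t) (1 / ?lk * (1 / r))"
    by (rule op_norm_le_mult[OF minv_Lk_carrier G_carrier op_norm_le_minv_Lk G_t])
      (use lam_k_pos in simp)
  then have "op_norm_le ?B (1 / ?lk * (1 / r) * (1 / ?lk))"
    by (rule op_norm_le_mult[OF mult_carrier_mat[OF minv_Lk_carrier G_carrier] minv_Lk_carrier _
          op_norm_le_minv_Lk]) (use lam_k_pos r_pos in simp)
  then have "op_norm_le (\<beta> \<cdot>\<^sub>m ?B) (\<bar>\<beta>\<bar> * (1 / ?lk * (1 / r) * (1 / ?lk)))"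
    by (rule op_norm_le_smult[OF B])
  also have "\<bar>\<beta>\<bar> * (1 / ?lk * (1 / r) * (1 / ?lk)) = r"
    using beta_eq beta_pos r_pos lam_k_pos by (simp add: power2_eq_square field_simps)
  finally have "op_norm_le (E (Suc t) - \<beta> \<cdot>\<^sub>m ?B) ((1 - 2 * r) / 32 + r)"
    using B by (intro op_norm_le_diff[OF E_carrier _ op_norm_le_E[OF P_inv]]) auto
  moreover have "1\<^sub>m k - \<beta> \<cdot>\<^sub>m Y + Z - 1 \<cdot>\<^sub>m 1\<^sub>m k = Z - \<beta> \<cdot>\<^sub>m Y"
    if "Y \<in> carrier_mat k k" "Z \<in> carrier_mat k k" for Y Z :: "real mat"
    using that by (intro eq_matI) auto
  then have "Ginv (Suc t) - 1 \<cdot>\<^sub>m 1\<^sub>m k = E (Suc t) - \<beta> \<cdot>\<^sub>m ?B"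
    unfolding Ginv_def using B by simp
  ultimately show ?thesis by simp
qed

lemma Ginv_invertible_and_G_bound_if_near_scalar:
  assumes near: "op_norm_le (Ginv t - a \<cdot>\<^sub>m 1\<^sub>m k) q" and gap: "r \<le> a - q"
  shows "invertible_mat (Ginv t) \<and> op_norm_le (G t) (1 / r)"
proof -
  have "q < a" using gap r_pos by linarith
  moreover have "1 / (a - q) \<le> 1 / r" using gap r_pos by (simp add: frac_le)
  ultimately show ?thesis
    using invertible_if_near_scalar[OF Ginv_carrier near]
      op_norm_le_minv_if_near_scalar[OF Ginv_carrier near]
    unfolding G_eq_minv_Ginv by (auto intro: op_norm_le_mono)
qed

lemma Ginv_invertible_and_G_bound:
  assumes P_inv: "invertible_mat (P t)" and G_prev: "\<And>s. t = Suc s \<Longrightarrow> op_norm_le (G s) (1 / r)"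
  shows "invertible_mat (Ginv t) \<and> op_norm_le (G t) (1 / r)"
proof (cases t)
  case 0
  have "r \<le> 1/2 - (1 - 2 * r) / 32" using r_less_half by (simp add: field_simps)
  then show ?thesis
    unfolding 0 by (rule Ginv_invertible_and_G_bound_if_near_scalar[OF Ginv_0_near_half])
next
  case (Suc s)
  have "r \<le> 1 - ((1 - 2 * r) / 32 + r)" using r_less_half by (simp add: field_simps)
  then show ?thesis
    using P_inv G_prev unfolding Suc
    by (intro Ginv_invertible_and_G_bound_if_near_scalar[OF Ginv_Suc_near_one]) auto
qed

definition regular :: "nat \<Rightarrow> bool" where
  "regular t \<longleftrightarrow> invertible_mat (P t) \<and> invertible_mat (C t) \<and> C t = P t * S t \<and>
     invertible_mat (Ginv t) \<and> op_norm_le (G t) (1 / r) \<and> (1 \<le> t \<longrightarrow> invertible_mat (R t))"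

lemma C_Suc: "invertible_mat (Ginv t) \<Longrightarrow> C (Suc t) = Lk * Ginv t * C t"
  by (simp add: G_eq_minv_Ginv minv_minv[OF _ Ginv_carrier])

lemma P_R_S_eq_Lk_Ginv_C_0: "P 1 * R 1 * S 0 = Lk * Ginv 0 * C 0"
proof -
  have "P 1 * R 1 * S 0 = (1/2) \<cdot>\<^sub>m Lk + Uk * Xi 0 * minv (P 0)"
    unfolding P_first_step S.simps using mult_minv_mat[OF P0_invertible P_carrier]
    by (simp add: k_square_simps)
  moreover have "Lk * Ginv 0 * C 0 = (1/2) \<cdot>\<^sub>m Lk + Uk * Xi 0 * minv (P 0)"
    unfolding Ginv_def E_eq[of 0]
    by (simp add: k_square_simps Lk_mult_minv_Lk)
  ultimately show ?thesis by simp
qed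

lemma P_R_S_eq_Lk_Ginv_C_Suc:
  assumes "regular t" "regular (Suc t)"
  shows "P (Suc (Suc t)) * R (Suc (Suc t)) * S (Suc t) = Lk * Ginv (Suc t) * C (Suc t)"
proof -
  from assms have R_inv: "invertible_mat (R (Suc t))" and P_inv: "invertible_mat (P (Suc t))"
    and C_t: "C t = P t * S t" and C_Suc_t: "C (Suc t) = P (Suc t) * S (Suc t)"
    and Ginv_inv: "invertible_mat (Ginv t)"
    unfolding regular_def by auto
  have S_back: "minv (R (Suc t)) * S (Suc t) = S t"
    using minv_mult_cancel_left[OF R_inv R_Suc_carrier S_carrier] by simp
  have P_cancel: "minv (P (Suc t)) * (P (Suc t) * S (Suc t)) = S (Suc t)"
    by (rule minv_mult_cancel_left[OF P_inv P_carrier S_carrier])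
  have "G t * (minv Lk * C (Suc t)) = G t * (Ginv t * C t)"
    unfolding C_Suc[OF Ginv_inv]
    by (simp add: k_square_simps minv_Lk_mult_Lk del: Cm.simps)
  also have "\<dots> = C t"
    unfolding G_eq_minv_Ginv by (rule minv_mult_cancel_left[OF Ginv_inv Ginv_carrier C_carrier])
  finally have G_back: "G t * (minv Lk * (P (Suc t) * S (Suc t))) = P t * S t"
    unfolding C_t C_Suc_t .
  have "P (Suc (Suc t)) * R (Suc (Suc t))
      = Lk * P (Suc t) - \<beta> \<cdot>\<^sub>m (P t * minv (R (Suc t))) + Uk * Xi (Suc t)"
    using P_step[of "Suc t"] by simp
  then have "P (Suc (Suc t)) * R (Suc (Suc t)) * S (Suc t)
      = Lk * (P (Suc t) * S (Suc t)) - \<beta> \<cdot>\<^sub>m (P t * S t) + Uk * Xi (Suc t) * S (Suc t)"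
    by (simp add: k_square_simps S_back del: S.simps)
  moreover have "Lk * Ginv (Suc t) * C (Suc t)
      = Lk * (P (Suc t) * S (Suc t)) - \<beta> \<cdot>\<^sub>m (P t * S t) + Uk * Xi (Suc t) * S (Suc t)"
    unfolding Ginv_def E_eq[of "Suc t"] C_Suc_t
    by (simp add: k_square_simps Lk_mult_minv_Lk
        P_cancel G_back del: Cm.simps Gm.simps S.simps)
  ultimately show ?thesis by simp
qed

lemma regular_0: "regular 0"
proof -
  have "C 0 = P 0 * S 0" using mult_minv_mat[OF P0_invertible P_carrier] by simp
  moreover have "invertible_mat (C 0)"
    using invertible_if_right_inverse[of "1\<^sub>m k" k "1\<^sub>m k"] by simp
  ultimately show ?thesis
    unfolding regular_def using P0_invertible Ginv_invertible_and_G_bound[OF P0_invertible] by simp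
qed

lemma regular_Suc:
  assumes reg: "regular t" and key: "P (Suc t) * R (Suc t) * S t = Lk * Ginv t * C t"
  shows "regular (Suc t)"
proof -
  from reg have Ginv_inv: "invertible_mat (Ginv t)" and C_inv: "invertible_mat (C t)"
    and G_t: "op_norm_le (G t) (1 / r)"
    unfolding regular_def by auto
  have C_eq: "C (Suc t) = P (Suc t) * R (Suc t) * S t" unfolding C_Suc[OF Ginv_inv] key ..
  have C_Suc_inv: "invertible_mat (C (Suc t))" unfolding C_Suc[OF Ginv_inv]
    by (intro invertible_mult_mat[of _ k] Lk_invertible Ginv_inv C_inv)
      (auto intro!: mult_carrier_mat[of _ k k])
  then have "invertible_mat (P (Suc t) * R (Suc t))"
    unfolding C_eq
    by (rule invertible_mult_factors(1)[OF mult_carrier_mat[OF P_carrier R_Suc_carrier] S_carrier])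
  then have P_inv: "invertible_mat (P (Suc t))" and R_inv: "invertible_mat (R (Suc t))"
    using invertible_mult_factors[OF P_carrier R_Suc_carrier] by auto
  have "C (Suc t) = P (Suc t) * S (Suc t)" unfolding C_eq by (simp add: k_square_simps)
  moreover have "invertible_mat (Ginv (Suc t)) \<and> op_norm_le (G (Suc t)) (1 / r)"
    using Ginv_invertible_and_G_bound[OF P_inv] G_t by simp
  ultimately show ?thesis unfolding regular_def using P_inv R_inv C_Suc_inv by simp
qed

lemma regular: "regular t"
proof -
  have "regular t \<and> regular (Suc t)"
  proof (induction t)
    case 0
    show ?case using regular_0 regular_Suc[of 0] P_R_S_eq_Lk_Ginv_C_0 by simp
  next
    case (Suc t)
    then show ?case using regular_Suc P_R_S_eq_Lk_Ginv_C_Suc by blast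
  qed
  then show ?thesis ..
qed

lemma mult_minv_P_mult_C:
  assumes Y: "Y \<in> carrier_mat m k"
  shows "Y * minv (P t) * C t = Y * S t"
proof -
  have P_inv: "invertible_mat (P t)" and C_t: "C t = P t * S t"
    using regular[of t] unfolding regular_def by auto
  have "Y * minv (P t) * C t = Y * (minv (P t) * (P t * S t))"
    unfolding C_t using Y mult_carrier_mat[OF P_carrier S_carrier]
    by (intro assoc_mult_mat[of _ m k _ k _ k]) auto
  also have "\<dots> = Y * S t" unfolding minv_mult_cancel_left[OF P_inv P_carrier S_carrier] ..
  finally show ?thesis .
qed

lemma H_mult_C: "Hm k U (X t) * C t = Q t * S t"
  unfolding Hm_def P_def[symmetric] Q_def[symmetric] by (rule mult_minv_P_mult_C[OF Q_carrier])

lemma Psi_mult_C: "Psim k U (Xi t) (X t) * C t = Ur * Xi t * S t"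
  unfolding Psim_def P_def[symmetric] by (rule mult_minv_P_mult_C[OF Ur_Xi_carrier])

lemma H_carrier: "Hm k U (X t) \<in> carrier_mat (d - k) k"
  unfolding Hm_def P_def[symmetric] Q_def[symmetric]
  by (rule mult_carrier_mat[OF Q_carrier minv_P_carrier])

lemma Lr_H_mult_C: "Lr * Hm k U (X t) * C t = Lr * (Q t * S t)"
  unfolding H_mult_C[symmetric] by (rule assoc_mult_mat[OF Lam_rest_carrier H_carrier C_carrier])

lemma H_mult_C_first_step:
  "Hm k U (X 1) * C 1 = (1/2) \<cdot>\<^sub>m (Lr * Hm k U (X 0) * C 0) + Psim k U (Xi 0) (X 0) * C 0"
proof -
  have "Hm k U (X 1) * C 1 = Q 1 * (R 1 * S 0)"
    using H_mult_C[of 1] by simp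
  also have "\<dots> = (Q 1 * R 1) * S 0"
    using assoc_mult_mat[symmetric, OF Q_carrier R_Suc_carrier S_carrier, of 1 0 0] by simp
  also have "\<dots> = (1/2) \<cdot>\<^sub>m (Lr * (Q 0 * S 0)) + Ur * Xi 0 * S 0"
    unfolding Q_first_step by (simp add: rest_rows_simps)
  finally show ?thesis unfolding Lr_H_mult_C Psi_mult_C .
qed

lemma H_mult_C_step:
  assumes "1 \<le> t"
  shows "Hm k U (X (t + 1)) * C (t + 1)
    = Lr * Hm k U (X t) * C t - \<beta> \<cdot>\<^sub>m (Hm k U (X (t - 1)) * C (t - 1)) + Psim k U (Xi t) (X t) * C t"
proof -
  obtain s where t: "t = Suc s" using assms by (cases t) auto
  have "invertible_mat (R t)" using regular[of t] assms unfolding regular_def by simp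
  then have S_back: "minv (R (Suc s)) * S (Suc s) = S s"
    unfolding t using minv_mult_cancel_left[OF _ R_Suc_carrier S_carrier] by simp
  have "Hm k U (X (t + 1)) * C (t + 1) = Q (Suc (Suc s)) * (R (Suc (Suc s)) * S (Suc s))"
    unfolding t using H_mult_C[of "Suc (Suc s)"] by simp
  also have "\<dots> = (Q (Suc (Suc s)) * R (Suc (Suc s))) * S (Suc s)"
    by (rule assoc_mult_mat[symmetric, OF Q_carrier R_Suc_carrier S_carrier])
  also have "\<dots> = Lr * (Q (Suc s) * S (Suc s)) - \<beta> \<cdot>\<^sub>m (Q s * S s) + Ur * Xi (Suc s) * S (Suc s)"
    using Q_step[of "Suc s"] by (simp add: rest_rows_simps S_back del: S.simps)
  finally show ?thesis unfolding t Lr_H_mult_C H_mult_C Psi_mult_C by simp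
qed

end

theorem lemma1:
  fixes d k :: nat and \<epsilon> \<beta> :: real and A U X0 :: "real mat" and lam :: "nat \<Rightarrow> real"
    and X R Xi :: "nat \<Rightarrow> real mat"
  assumes dk: "d > k" "k \<ge> 1"
    and eps: "0 < \<epsilon>" "\<epsilon> < 1"
    and A: "A \<in> carrier_mat d d" "transpose_mat A = A"
    and psd: "\<forall>x \<in> carrier_vec d. x \<bullet> (A *\<^sub>v x) \<ge> 0"
    and U: "U \<in> carrier_mat d d" "transpose_mat U * U = 1\<^sub>m d"
    and eig: "\<forall>i<d. A *\<^sub>v col U i = lam i \<cdot>\<^sub>v col U i"
    and lam_sorted: "\<forall>i j. i \<le> j \<and> j < d \<longrightarrow> lam j \<le> lam i"
    and lam_nonneg: "\<forall>i<d. lam i \<ge> 0"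
    and gap: "lam (k - 1) > lam k"
    and beta: "\<beta> > 0" "lam (k - 1) > 2 * sqrt \<beta>" "2 * sqrt \<beta> \<ge> lam k"
    and X0: "X0 \<in> stiefel d k" "cos (theta (Ufirst k U) X0) > 0"
    and Xi_dim: "\<forall>t. Xi t \<in> carrier_mat d k"
    and init: "X 0 = X0"
    and step1: "is_QR k ((1/2) \<cdot>\<^sub>m (A * X 0) + Xi 0) (X 1) (R 1)"
    and step: "\<forall>t\<ge>1. is_QR k (A * X t - \<beta> \<cdot>\<^sub>m (X (t - 1) * minv (R t)) + Xi t)
                             (X (t + 1)) (R (t + 1))"
    and pert1: "\<forall>t. spec_norm (transpose_mat (Urest k U) * Xi t)
                     \<le> (1/32) * (lam (k - 1) - 2 * sqrt \<beta>) * \<epsilon>"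
    and pert2: "\<forall>t. spec_norm (transpose_mat (Ufirst k U) * Xi t)
                     \<le> (1/32) * (lam (k - 1) - 2 * sqrt \<beta>) * cos (theta (Ufirst k U) (X t))"
  shows "let H = (\<lambda>t. Hm k U (X t));
             Psi = (\<lambda>t. Psim k U (Xi t) (X t));
             E = (\<lambda>t. Em k U lam (Xi t) (X t));
             C = Cm k lam \<beta> E;
             Lr = Lam_rest d k lam
         in (\<forall>t\<ge>1. H (t + 1) * C (t + 1)
                    = Lr * H t * C t - \<beta> \<cdot>\<^sub>m (H (t - 1) * C (t - 1)) + Psi t * C t)
            \<and> H 1 * C 1 = (1/2) \<cdot>\<^sub>m (Lr * H 0 * C 0) + Psi 0 * C 0"
proof -
  (* The hypotheses involving \<epsilon>, positive semidefiniteness and \<lambda>_{k+1} are only needed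
     for the convergence analysis, not for this identity. *)
  interpret anpm d k \<beta> A U lam X R Xi
    by unfold_locales (use dk A U eig lam_sorted beta X0 init Xi_dim step1 step pert2 in auto)
  show ?thesis
    unfolding Let_def E_def[symmetric] using H_mult_C_step H_mult_C_first_step by auto
qed

end
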